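(* Let $\mathcal{M},\mathcal{N}\in\mathbb{N}$ and let $\boldsymbol{L}\in\mathbb{R}^{\mathcal{M}\times\mathcal{N}}$ be such that, for each $i=1,\dots,\mathcal{M}$, the entries $L_{i1},\dots,L_{i\mathcal{N}}$ together with $1$ are linearly independent over $\mathbb{Q}$. Let $\varepsilon,T>0$ and $\boldsymbol{Q}\in[1,+\infty)^{\mathcal{N}}$. Then for each $i=1,\dots,\mathcal{M}$, $$\#\big(\Lambda_{\boldsymbol{L}}\cap Z^i\big)\ll_{\mathcal{M}}(1+T)^{\mathcal{M}},$$ with implied constant depending only on $\mathcal{M}$.
   Context: $\Lambda_{\boldsymbol{L}}:=\{(L_1\boldsymbol{q}+p_1,\dots,L_{\mathcal{M}}\boldsymbol{q}+p_{\mathcal{M}},\boldsymbol{q}):\boldsymbol{p}\in\mathbb{Z}^{\mathcal{M}},\boldsymbol{q}\in\mathbb{Z}^{\mathcal{N}}\}\subset\mathbb{R}^{\mathcal{M}+\mathcal{N}}$, where $L_i\boldsymbol{q}=\sum_jL_{ij}q_j$. Let $H:=\{\boldsymbol{x}\in\mathbb{R}^{\mathcal{M}}:\prod_{i=1}^{\mathcal{M}}|x_i|<\varepsilon,\ |x_i|\le T\ (i=1,\dots,\mathcal{M})\}$, $H^i:=H\cap\{x_i=0\}$, and $Z^i:=H^i\times\prod_{j=1}^{\mathcal{N}}[-Q_j,Q_j]$. *)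

theory Defs
  imports Complex_Main
begin

(* Points of R^(M+N) are modelled as functions x :: nat => real, coordinates
   x 1, ..., x (M+N) (1-based as in the paper), all other values are 0.
   Coordinate k in {1..M} is the x-part, coordinate M+j (j in {1..N}) is q_j. *)

definition row_Q_indep :: "nat \<Rightarrow> (nat \<Rightarrow> nat \<Rightarrow> real) \<Rightarrow> nat \<Rightarrow> bool" where
  "row_Q_indep N L i \<longleftrightarrow>
     (\<forall>(r0::rat) (r::nat \<Rightarrow> rat).
        of_rat r0 + (\<Sum>j=1..N. of_rat (r j) * L i j) = 0 \<longrightarrow>
        r0 = 0 \<and> (\<forall>j\<in>{1..N}. r j = 0))"

definition Lambda_L :: "nat \<Rightarrow> nat \<Rightarrow> (nat \<Rightarrow> nat \<Rightarrow> real) \<Rightarrow> (nat \<Rightarrow> real) set" where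
  "Lambda_L M N L = {x. \<exists>(p::nat \<Rightarrow> int) (q::nat \<Rightarrow> int).
      (\<forall>k\<in>{1..M}. x k = (\<Sum>j=1..N. L k j * of_int (q j)) + of_int (p k)) \<and>
      (\<forall>j\<in>{1..N}. x (M + j) = of_int (q j)) \<and>
      (\<forall>k. k \<notin> {1..M+N} \<longrightarrow> x k = 0)}"

definition Z_set :: "nat \<Rightarrow> nat \<Rightarrow> real \<Rightarrow> real \<Rightarrow> (nat \<Rightarrow> real) \<Rightarrow> nat \<Rightarrow> (nat \<Rightarrow> real) set" where
  "Z_set M N \<epsilon> T Q i = {x.
      (\<Prod>k=1..M. \<bar>x k\<bar>) < \<epsilon> \<and> (\<forall>k\<in>{1..M}. \<bar>x k\<bar> \<le> T) \<and> x i = 0 \<and>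
      (\<forall>j\<in>{1..N}. \<bar>x (M + j)\<bar> \<le> Q j) \<and>
      (\<forall>k. k \<notin> {1..M+N} \<longrightarrow> x k = 0)}"

end

theory Submission
  imports Defs "HOL-Library.FuncSet"
begin

text \<open>A point of \<open>\<Lambda>\<^sub>L\<close> has coordinates \<open>x\<^sub>i = L\<^sub>i q + p\<^sub>i\<close>; if \<open>x\<^sub>i = 0\<close>, this is a rational
  relation between \<open>1, L\<^sub>i\<^sub>1, \<dots>, L\<^sub>i\<^sub>N\<close>, so independence forces \<open>q = 0\<close>. Hence every point
  of \<open>\<Lambda>\<^sub>L \<inter> Z\<^sup>i\<close> is an integer vector \<open>(p, 0)\<close> with \<open>|p\<^sub>k| \<le> T\<close>, and there are at most
  \<open>(2T + 1)\<^sup>M\<close> of them; neither \<open>\<epsilon>\<close> nor \<open>Q\<close> enters the bound.\<close>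

definition embed_int_vector :: "nat \<Rightarrow> (nat \<Rightarrow> int) \<Rightarrow> nat \<Rightarrow> real" where
  "embed_int_vector M p = (\<lambda>k. if k \<in> {1..M} then of_int (p k) else 0)"

lemma row_Q_indep_int_relation:
  assumes "row_Q_indep N L i"
    and "of_int p0 + (\<Sum>j=1..N. L i j * of_int (q j)) = 0"
  shows "\<forall>j\<in>{1..N}. q j = 0"
proof -
  have "of_rat (of_int p0) + (\<Sum>j=1..N. of_rat (of_int (q j)) * L i j) = (0::real)"
    using assms(2) by (simp add: of_rat_of_int_eq mult.commute)
  then show ?thesis
    using assms(1) unfolding row_Q_indep_def by fastforce
qed

lemma Lambda_L_zero_coordinate_imp_int_vector:
  assumes "x \<in> Lambda_L M N L" "i \<in> {1..M}" "x i = 0" "row_Q_indep N L i"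
  shows "\<exists>p. x = embed_int_vector M p"
proof -
  obtain p q where
      x_head: "\<forall>k\<in>{1..M}. x k = (\<Sum>j=1..N. L k j * of_int (q j)) + of_int (p k)"
    and x_tail: "\<forall>j\<in>{1..N}. x (M + j) = of_int (q j)"
    and x_outside: "\<forall>k. k \<notin> {1..M+N} \<longrightarrow> x k = 0"
    using assms(1) unfolding Lambda_L_def by blast
  have q_zero: "\<forall>j\<in>{1..N}. q j = 0"
    using row_Q_indep_int_relation[OF assms(4), of "p i" q] x_head assms(2,3)
    by (simp add: add.commute)
  have "x k = embed_int_vector M p k" for k
  proof (cases "k \<in> {1..M}")
    case True
    then show ?thesis using x_head q_zero by (simp add: embed_int_vector_def)
  next
    case False
    then have "k \<in> {1..M+N} \<Longrightarrow> k - M \<in> {1..N} \<and> k = M + (k - M)" by auto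
    then show ?thesis
      using False x_tail x_outside q_zero unfolding embed_int_vector_def by (metis of_int_0)
  qed
  then show ?thesis by blast
qed

lemma abs_of_int_le_imp_floor_bounds:
  assumes "\<bar>of_int k\<bar> \<le> (T::real)"
  shows "k \<in> {-\<lfloor>T\<rfloor>..\<lfloor>T\<rfloor>}"
proof -
  have "of_int k \<le> T" "- T \<le> of_int k" using assms by linarith+
  then show ?thesis
    by (simp add: le_floor_iff) (metis ceiling_le_iff ceiling_minus minus_le_iff)
qed

lemma Lambda_L_inter_Z_set_subset_int_box:
  assumes "i \<in> {1..M}" "row_Q_indep N L i"
  shows "Lambda_L M N L \<inter> Z_set M N \<epsilon> T Q i
           \<subseteq> embed_int_vector M ` (PiE {1..M} (\<lambda>_. {-\<lfloor>T\<rfloor>..\<lfloor>T\<rfloor>}))"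
proof
  fix x assume x: "x \<in> Lambda_L M N L \<inter> Z_set M N \<epsilon> T Q i"
  then have bounded: "\<forall>k\<in>{1..M}. \<bar>x k\<bar> \<le> T" and "x i = 0"
    unfolding Z_set_def by auto
  then obtain p where p: "x = embed_int_vector M p"
    using Lambda_L_zero_coordinate_imp_int_vector x assms by blast
  have "restrict p {1..M} \<in> PiE {1..M} (\<lambda>_. {-\<lfloor>T\<rfloor>..\<lfloor>T\<rfloor>})"
    using bounded abs_of_int_le_imp_floor_bounds by (auto simp: p embed_int_vector_def)
  moreover have "x = embed_int_vector M (restrict p {1..M})"
    by (auto simp: p embed_int_vector_def)
  ultimately show "x \<in> embed_int_vector M ` PiE {1..M} (\<lambda>_. {-\<lfloor>T\<rfloor>..\<lfloor>T\<rfloor>})" by blast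
qed

lemma card_int_box_le:
  assumes "(T::real) \<ge> 0"
  shows "real (card (PiE {1..M} (\<lambda>_. {-\<lfloor>T\<rfloor>..\<lfloor>T\<rfloor>}))) \<le> (2 * T + 1) ^ M"
proof -
  have "real (card (PiE {1..M} (\<lambda>_. {-\<lfloor>T\<rfloor>..\<lfloor>T\<rfloor>}))) = (2 * of_int \<lfloor>T\<rfloor> + 1) ^ M"
    using assms by (simp add: card_PiE)
  also have "\<dots> \<le> (2 * T + 1) ^ M"
    using assms by (intro power_mono) auto
  finally show ?thesis .
qed

theorem lemma2p2:
  fixes M :: nat
  shows "\<exists>C>0. \<forall>(N::nat) (L::nat \<Rightarrow> nat \<Rightarrow> real) (\<epsilon>::real) (T::real) (Q::nat \<Rightarrow> real) (i::nat).
     (\<forall>i'\<in>{1..M}. row_Q_indep N L i') \<longrightarrow> \<epsilon> > 0 \<longrightarrow> T > 0 \<longrightarrow>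
     (\<forall>j\<in>{1..N}. Q j \<ge> 1) \<longrightarrow> i \<in> {1..M} \<longrightarrow>
     finite (Lambda_L M N L \<inter> Z_set M N \<epsilon> T Q i) \<and>
     real (card (Lambda_L M N L \<inter> Z_set M N \<epsilon> T Q i)) \<le> C * (1 + T) ^ M"
proof (intro exI[of _ "2 ^ M"] conjI allI impI)
  show "(0::real) < 2 ^ M" by simp
  fix N L \<epsilon> T Q i
  assume indep: "\<forall>i'\<in>{1..M}. row_Q_indep N L i'" and "(0::real) < T" and i: "i \<in> {1..M}"
  define box where "box = PiE {1..M} (\<lambda>_. {-\<lfloor>T\<rfloor>..\<lfloor>T\<rfloor>})"
  have finite_box: "finite box" unfolding box_def by (simp add: finite_PiE)
  have subset: "Lambda_L M N L \<inter> Z_set M N \<epsilon> T Q i \<subseteq> embed_int_vector M ` box"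
    unfolding box_def using Lambda_L_inter_Z_set_subset_int_box i indep by blast
  then show "finite (Lambda_L M N L \<inter> Z_set M N \<epsilon> T Q i)"
    using finite_box finite_subset by blast
  have "card (Lambda_L M N L \<inter> Z_set M N \<epsilon> T Q i) \<le> card box"
    using subset finite_box by (meson card_image_le card_mono finite_imageI order_trans)
  then have "real (card (Lambda_L M N L \<inter> Z_set M N \<epsilon> T Q i)) \<le> (2 * T + 1) ^ M"
    using card_int_box_le[of T M] \<open>0 < T\<close> unfolding box_def by linarith
  also have "\<dots> \<le> (2 * (1 + T)) ^ M"
    using \<open>0 < T\<close> by (intro power_mono) auto
  finally show "real (card (Lambda_L M N L \<inter> Z_set M N \<epsilon> T Q i)) \<le> 2 ^ M * (1 + T) ^ M"
    by (simp only: power_mult_distrib)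
qed

end
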